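(* Fix $n$. If $K_{s_1}^{t_1}$ and $K_{s_2}^{t_2}$ are graphs with $2\le t_i\le s_i$ and $s_1+t_1=s_2+t_2=n$ that are $D$-cospectral, then they are isomorphic. That is, no two non-isomorphic graphs in $\mathbb{K}_{s}^{t}=\{K_{s}^{t}\mid 2\leq t\leq s,\ s+t=n\}$ are $D$-cospectral.
   Context: Two connected graphs are $D$-cospectral if their distance matrices have the same spectrum. $K_{s}^{t}$ denotes the graph on $s+t$ vertices obtained from the complete graph $K_s$ by attaching a pendant edge (a new vertex of degree 1) to each of $t$ distinct vertices of $K_s$. *)

theory Defs
  imports Main "Jordan_Normal_Form.Char_Poly"
begin

text \<open>A (finite simple) graph is represented by its vertex set {0..<n} together with a
  symmetric irreflexive adjacency relation.\<close>

text \<open>K_s^t: vertices 0..s-1 form the clique K_s; for each j < t the vertex s+j is a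
  pendant vertex attached to clique vertex j.\<close>
definition Kst_adj :: "nat \<Rightarrow> nat \<Rightarrow> nat \<Rightarrow> nat \<Rightarrow> bool" where
  "Kst_adj s t i j \<longleftrightarrow> i \<noteq> j \<and>
     ((i < s \<and> j < s) \<or> (i < t \<and> j = s + i) \<or> (j < t \<and> i = s + j))"

definition has_walk :: "(nat \<Rightarrow> nat \<Rightarrow> bool) \<Rightarrow> nat set \<Rightarrow> nat \<Rightarrow> nat \<Rightarrow> nat \<Rightarrow> bool" where
  "has_walk adj V k u v \<longleftrightarrow> (\<exists>xs. length xs = Suc k \<and> hd xs = u \<and> last xs = v \<and>
      set xs \<subseteq> V \<and> (\<forall>i<k. adj (xs ! i) (xs ! Suc i)))"

definition graph_dist :: "(nat \<Rightarrow> nat \<Rightarrow> bool) \<Rightarrow> nat set \<Rightarrow> nat \<Rightarrow> nat \<Rightarrow> nat" where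
  "graph_dist adj V u v = (LEAST k. has_walk adj V k u v)"

definition dist_matrix :: "(nat \<Rightarrow> nat \<Rightarrow> bool) \<Rightarrow> nat \<Rightarrow> real mat" where
  "dist_matrix adj n = mat n n (\<lambda>(i, j). real (graph_dist adj {0..<n} i j))"

text \<open>D-cospectral: the distance matrices have the same spectrum (with multiplicities),
  i.e. the same characteristic polynomial.\<close>
definition D_cospectral :: "(nat \<Rightarrow> nat \<Rightarrow> bool) \<Rightarrow> nat \<Rightarrow> (nat \<Rightarrow> nat \<Rightarrow> bool) \<Rightarrow> nat \<Rightarrow> bool" where
  "D_cospectral adj1 n1 adj2 n2 \<longleftrightarrow>
     n1 = n2 \<and> char_poly (dist_matrix adj1 n1) = char_poly (dist_matrix adj2 n2)"

definition graph_iso :: "(nat \<Rightarrow> nat \<Rightarrow> bool) \<Rightarrow> nat \<Rightarrow> (nat \<Rightarrow> nat \<Rightarrow> bool) \<Rightarrow> nat \<Rightarrow> bool" where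
  "graph_iso adj1 n1 adj2 n2 \<longleftrightarrow> (\<exists>f. bij_betw f {0..<n1} {0..<n2} \<and>
     (\<forall>i\<in>{0..<n1}. \<forall>j\<in>{0..<n1}. adj1 i j \<longleftrightarrow> adj2 (f i) (f j)))"

end

theory Submission
  imports Defs "Jordan_Normal_Form.Schur_Decomposition"
begin

text \<open>The trace of the square of a matrix is the sum of the squares of its eigenvalues, so it is
  determined by the characteristic polynomial. For the distance matrix of \<open>K\<^sub>s\<^sup>t\<close>
  this trace is the sum of the squared distances, which with \<open>s = n - t\<close> equals
  \<open>n\<^sup>2 - n + 6nt + 2t\<^sup>2 - 14t\<close>. For fixed \<open>n\<close> this is strictly increasing in
  \<open>t \<ge> 2\<close>, so \<open>D\<close>-cospectrality forces \<open>t\<^sub>1 = t\<^sub>2\<close> and hence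
  \<open>s\<^sub>1 = s\<^sub>2\<close>.\<close>

lemma has_walk_0_iff: "has_walk adj V 0 u v \<longleftrightarrow> u = v \<and> u \<in> V"
proof
  assume "has_walk adj V 0 u v"
  then obtain xs where "length xs = 1" "hd xs = u" "last xs = v" "set xs \<subseteq> V"
    unfolding has_walk_def by auto
  then show "u = v \<and> u \<in> V" by (cases xs) auto
qed (auto simp: has_walk_def intro!: exI[of _ "[u]"])

lemma has_walk_Suc_iff:
  "has_walk adj V (Suc k) u v \<longleftrightarrow> u \<in> V \<and> (\<exists>w. adj u w \<and> has_walk adj V k w v)"
proof
  assume "has_walk adj V (Suc k) u v"
  then obtain ys where walk: "length ys = Suc k" "last (u # ys) = v" "set (u # ys) \<subseteq> V"
      "\<forall>i<Suc k. adj ((u # ys) ! i) ((u # ys) ! Suc i)"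
    unfolding has_walk_def by (metis length_Suc_conv list.sel(1))
  then have "adj u (hd ys)"
    by (metis hd_conv_nth list.size(3) nat.distinct(1) nth_Cons_0 nth_Cons_Suc zero_less_Suc)
  moreover have "has_walk adj V k (hd ys) v"
    unfolding has_walk_def using walk by (intro exI[of _ ys]) auto
  ultimately show "u \<in> V \<and> (\<exists>w. adj u w \<and> has_walk adj V k w v)"
    using walk by auto
next
  assume "u \<in> V \<and> (\<exists>w. adj u w \<and> has_walk adj V k w v)"
  then obtain ys where walk: "u \<in> V" "adj u (hd ys)" "length ys = Suc k" "last ys = v"
      "set ys \<subseteq> V" "\<forall>i<k. adj (ys ! i) (ys ! Suc i)"
    unfolding has_walk_def by blast
  have "hd ys = ys ! 0" using walk(3) by (cases ys) auto
  then have "adj ((u # ys) ! i) ((u # ys) ! Suc i)" if "i < Suc k" for i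
    using that walk by (cases i) auto
  then show "has_walk adj V (Suc k) u v"
    unfolding has_walk_def using walk by (intro exI[of _ "u # ys"]) auto
qed

lemma has_walk_Cons:
  "u \<in> V \<Longrightarrow> adj u w \<Longrightarrow> has_walk adj V k w v \<Longrightarrow> has_walk adj V (Suc k) u v"
  using has_walk_Suc_iff by blast

lemma graph_dist_eqI:
  assumes "has_walk adj V d u v" "\<And>k. k < d \<Longrightarrow> \<not> has_walk adj V k u v"
  shows "graph_dist adj V u v = d"
  unfolding graph_dist_def by (rule Least_equality) (use assms not_less in auto)

definition Kst_dist :: "nat \<Rightarrow> nat \<Rightarrow> nat \<Rightarrow> nat \<Rightarrow> nat" where
  "Kst_dist s t i j =
     (if i = j then 0
      else if i < s \<and> j < s then 1
      else if i < s then (if j = s + i then 1 else 2)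
      else if j < s then (if i = s + j then 1 else 2)
      else 3)"

lemma has_walk_Kst_dist:
  assumes "t \<le> s" "i < s + t" "j < s + t"
  shows "has_walk (Kst_adj s t) {0..<s + t} (Kst_dist s t i j) i j"
proof -
  let ?V = "{0..<s + t}"
  have "i \<in> ?V" and "j \<in> ?V" and stop: "has_walk (Kst_adj s t) ?V 0 j j"
    using assms by (auto simp: has_walk_0_iff)
  have "i = j \<or> Kst_adj s t i j \<or> (i < s \<and> s \<le> j \<and> j \<noteq> s + i)
      \<or> (s \<le> i \<and> j < s \<and> i \<noteq> s + j) \<or> (s \<le> i \<and> s \<le> j \<and> i \<noteq> j)"
    using assms unfolding Kst_adj_def by linarith
  then consider "i = j" | "Kst_adj s t i j" | "i < s" "s \<le> j" "j \<noteq> s + i"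
    | "s \<le> i" "j < s" "i \<noteq> s + j" | "s \<le> i" "s \<le> j" "i \<noteq> j"
    by blast
  then show ?thesis
  proof cases
    case 1
    then show ?thesis using stop by (simp add: Kst_dist_def)
  next
    case 2
    then show ?thesis
      using assms has_walk_Cons[OF \<open>i \<in> ?V\<close> 2 stop] by (auto simp: Kst_dist_def Kst_adj_def)
  next
    case 3
    then have "Kst_adj s t i (j - s)" "Kst_adj s t (j - s) j" "j - s \<in> ?V"
      using assms by (auto simp: Kst_adj_def)
    then show ?thesis
      using 3 has_walk_Cons[OF \<open>i \<in> ?V\<close> _ has_walk_Cons[OF _ _ stop]]
      by (auto simp: Kst_dist_def numeral_2_eq_2)
  next
    case 4
    then have "Kst_adj s t i (i - s)" "Kst_adj s t (i - s) j" "i - s \<in> ?V"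
      using assms by (auto simp: Kst_adj_def)
    then show ?thesis
      using 4 has_walk_Cons[OF \<open>i \<in> ?V\<close> _ has_walk_Cons[OF _ _ stop]]
      by (auto simp: Kst_dist_def numeral_2_eq_2)
  next
    case 5
    then have "Kst_adj s t i (i - s)" "Kst_adj s t (i - s) (j - s)" "Kst_adj s t (j - s) j"
        "i - s \<in> ?V" "j - s \<in> ?V"
      using assms by (auto simp: Kst_adj_def)
    then show ?thesis
      using 5 has_walk_Cons[OF \<open>i \<in> ?V\<close> _ has_walk_Cons[OF _ _ has_walk_Cons[OF _ _ stop]]]
      by (auto simp: Kst_dist_def numeral_3_eq_3)
  qed
qed

lemma not_has_walk_less_Kst_dist:
  assumes "t \<le> s" "i < s + t" "j < s + t" "k < Kst_dist s t i j"
  shows "\<not> has_walk (Kst_adj s t) {0..<s + t} k i j"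
proof -
  have "k = 0 \<or> k = 1 \<or> k = 2" using assms by (auto simp: Kst_dist_def split: if_splits)
  then show ?thesis using assms
    by (auto simp: numeral_2_eq_2 has_walk_0_iff has_walk_Suc_iff Kst_adj_def Kst_dist_def
        split: if_splits)
qed

lemma dist_matrix_Kst_index:
  assumes "t \<le> s" "i < s + t" "j < s + t"
  shows "dist_matrix (Kst_adj s t) (s + t) $$ (i, j) = real (Kst_dist s t i j)"
  using assms
  by (simp add: dist_matrix_def graph_dist_eqI has_walk_Kst_dist not_has_walk_less_Kst_dist)

lemma sum_lessThan_add:
  fixes f :: "nat \<Rightarrow> 'a::comm_monoid_add"
  shows "(\<Sum>j<m + n. f j) = (\<Sum>j<m. f j) + (\<Sum>j<n. f (m + j))"
  by (induction n) (auto simp: add.assoc)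

lemma sum_lessThan_if_eq:
  fixes x y :: "'a::comm_ring_1"
  shows "(\<Sum>j<n. if j = a then x else y) = (if a < n then x + of_nat (n - 1) * y else of_nat n * y)"
proof -
  have "(\<Sum>j<n. if j = a then x else y) = (\<Sum>j<n. y + (if j = a then x - y else 0))"
    by (intro sum.cong) auto
  then show ?thesis
    by (cases n) (auto simp: sum.distrib algebra_simps)
qed

lemma Kst_dist_product_sum:
  assumes "t \<le> s"
  shows "(\<Sum>i<s + t. \<Sum>j<s + t. real (Kst_dist s t i j) * real (Kst_dist s t j i))
     = real s * (real s - 1) + 8 * real s * real t - 6 * real t + 9 * real t * (real t - 1)"
proof -
  define f where "f i j = real (Kst_dist s t i j) * real (Kst_dist s t j i)" for i j
  have clique_clique: "(\<Sum>j<s. f i j) = real s - 1" if "i < s" for i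
  proof -
    have "(\<Sum>j<s. f i j) = (\<Sum>j<s. if j = i then 0 else 1)"
      by (rule sum.cong) (use that in \<open>auto simp: f_def Kst_dist_def\<close>)
    then show ?thesis using that by (simp add: sum_lessThan_if_eq of_nat_diff)
  qed
  have clique_pendant: "(\<Sum>b<t. f i (s + b)) = (if i < t then 4 * real t - 3 else 4 * real t)"
    if "i < s" for i
  proof -
    have "(\<Sum>b<t. f i (s + b)) = (\<Sum>b<t. if b = i then 1 else 4)"
      by (rule sum.cong) (use that in \<open>auto simp: f_def Kst_dist_def\<close>)
    then show ?thesis using that by (simp add: sum_lessThan_if_eq of_nat_diff algebra_simps)
  qed
  have pendant_clique: "(\<Sum>j<s. f (s + a) j) = 4 * real s - 3" if "a < t" for a
  proof -
    have "(\<Sum>j<s. f (s + a) j) = (\<Sum>j<s. if j = a then 1 else 4)"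
      by (rule sum.cong) (use that in \<open>auto simp: f_def Kst_dist_def\<close>)
    then show ?thesis using that assms by (simp add: sum_lessThan_if_eq of_nat_diff algebra_simps)
  qed
  have pendant_pendant: "(\<Sum>b<t. f (s + a) (s + b)) = 9 * (real t - 1)" if "a < t" for a
  proof -
    have "(\<Sum>b<t. f (s + a) (s + b)) = (\<Sum>b<t. if b = a then 0 else 9)"
      by (rule sum.cong) (use that in \<open>auto simp: f_def Kst_dist_def\<close>)
    then show ?thesis using that by (simp add: sum_lessThan_if_eq of_nat_diff algebra_simps)
  qed
  have "(\<Sum>i<s + t. \<Sum>j<s + t. f i j)
      = (\<Sum>i<s. (\<Sum>j<s. f i j) + (\<Sum>b<t. f i (s + b)))
        + (\<Sum>a<t. (\<Sum>j<s. f (s + a) j) + (\<Sum>b<t. f (s + a) (s + b)))"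
    by (simp add: sum_lessThan_add)
  also have "\<dots> = (\<Sum>i<t + (s - t). real s - 1 + (if i < t then 4 * real t - 3 else 4 * real t))
        + (\<Sum>a<t. 4 * real s - 3 + 9 * (real t - 1))"
    using assms clique_clique clique_pendant pendant_clique pendant_pendant by simp
  also have "\<dots> = real t * (real s - 1 + 4 * real t - 3) + real (s - t) * (real s - 1 + 4 * real t)
        + real t * (4 * real s - 3 + 9 * (real t - 1))"
    by (simp add: sum_lessThan_add)
  finally show ?thesis
    using assms unfolding f_def by (simp add: of_nat_diff algebra_simps)
qed

definition mat_trace :: "'a::comm_ring_1 mat \<Rightarrow> 'a" where
  "mat_trace A = (\<Sum>i<dim_row A. A $$ (i, i))"

lemma mat_trace_mult_comm:
  assumes "A \<in> carrier_mat n m" "B \<in> carrier_mat m n"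
  shows "mat_trace (A * B) = mat_trace (B * A)"
proof -
  have "mat_trace (A * B) = (\<Sum>i<n. \<Sum>k<m. A $$ (i, k) * B $$ (k, i))"
    using assms by (simp add: mat_trace_def scalar_prod_def atLeast0LessThan)
  also have "\<dots> = (\<Sum>k<m. \<Sum>i<n. B $$ (k, i) * A $$ (i, k))"
    by (subst sum.swap) (simp add: mult.commute)
  also have "\<dots> = mat_trace (B * A)"
    using assms by (simp add: mat_trace_def scalar_prod_def atLeast0LessThan)
  finally show ?thesis .
qed

lemma mat_trace_similar:
  assumes "similar_mat_wit A B P Q"
  shows "mat_trace A = mat_trace B"
proof -
  define n where "n = dim_row A"
  note wit = similar_mat_witD[OF n_def assms]
  have "mat_trace A = mat_trace (P * (B * Q))"
    using wit by (simp add: assoc_mult_mat[of _ n n _ n _ n])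
  also have "\<dots> = mat_trace (B * Q * P)"
    using wit by (simp add: mat_trace_mult_comm[of P n n])
  also have "\<dots> = mat_trace B"
    using wit by (simp add: assoc_mult_mat[of _ n n _ n _ n])
  finally show ?thesis .
qed

lemma mat_trace_square:
  assumes "A \<in> carrier_mat n n"
  shows "mat_trace (A * A) = (\<Sum>i<n. \<Sum>k<n. A $$ (i, k) * A $$ (k, i))"
  using assms by (simp add: mat_trace_def scalar_prod_def atLeast0LessThan)

lemma mat_trace_square_upper_triangular:
  assumes "B \<in> carrier_mat n n" "upper_triangular B"
  shows "mat_trace (B * B) = (\<Sum>i<n. B $$ (i, i) ^ 2)"
proof -
  have "B $$ (i, k) * B $$ (k, i) = (if k = i then B $$ (i, i) ^ 2 else 0)"
    if "i < n" "k < n" for i k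
    using assms that unfolding upper_triangular_def
    by (cases "k < i") (auto simp: power2_eq_square)
  then show ?thesis by (simp add: mat_trace_square[OF assms(1)])
qed

lemma mat_trace_square_eigenvalues:
  fixes A :: "complex mat"
  assumes A: "A \<in> carrier_mat n n" and char_poly: "char_poly A = (\<Prod>e\<leftarrow>es. [:- e, 1:])"
  shows "mat_trace (A * A) = (\<Sum>e\<leftarrow>es. e ^ 2)"
proof -
  obtain B P Q where "schur_decomposition A es = (B, P, Q)"
    by (cases "schur_decomposition A es")
  from schur_decomposition[OF A char_poly this]
  have wit: "similar_mat_wit A B P Q" and "upper_triangular B" and diag: "diag_mat B = es"
    by auto
  have B: "B \<in> carrier_mat n n" using similar_mat_witD2[OF A wit] by auto
  have "mat_trace (A * A) = mat_trace (B * B)"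
    using mat_trace_similar[OF similar_mat_wit_pow[OF wit, of 2]] A B
    by (simp add: numeral_2_eq_2)
  also have "\<dots> = (\<Sum>i<n. B $$ (i, i) ^ 2)"
    by (rule mat_trace_square_upper_triangular[OF B \<open>upper_triangular B\<close>])
  also have "\<dots> = (\<Sum>e\<leftarrow>es. e ^ 2)"
    unfolding diag[symmetric] diag_mat_def using B
    by (simp add: sum_list_map_eq_sum_count2 lessThan_atLeast0 o_def
        flip: sum_set_upt_conv_sum_list_nat)
  finally show ?thesis .
qed

lemma char_poly_eq_imp_mat_trace_square_eq:
  fixes A B :: "real mat"
  assumes A: "A \<in> carrier_mat n n" and B: "B \<in> carrier_mat n n"
    and "char_poly A = char_poly B"
  shows "mat_trace (A * A) = mat_trace (B * B)"
proof -
  let ?C = "map_mat complex_of_real"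
  have trace_complex: "mat_trace (?C M * ?C M) = complex_of_real (mat_trace (M * M))"
    if "M \<in> carrier_mat n n" for M
    using that by (simp add: mat_trace_square)
  have C: "?C A \<in> carrier_mat n n" "?C B \<in> carrier_mat n n" using A B by auto
  obtain es where es: "char_poly (?C A) = (\<Prod>e\<leftarrow>es. [:- e, 1:])"
    using char_poly_factorized[OF C(1)] by blast
  moreover have "char_poly (?C B) = char_poly (?C A)"
    using assms by (simp add: of_real_hom.char_poly_hom)
  ultimately have "mat_trace (?C A * ?C A) = mat_trace (?C B * ?C B)"
    using mat_trace_square_eigenvalues[OF C(1) es] mat_trace_square_eigenvalues[OF C(2), of es]
    by simp
  then show ?thesis by (simp add: trace_complex A B)
qed

lemma mat_trace_square_dist_matrix_Kst:
  assumes "t \<le> s"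
  shows "mat_trace (dist_matrix (Kst_adj s t) (s + t) * dist_matrix (Kst_adj s t) (s + t))
     = real s * (real s - 1) + 8 * real s * real t - 6 * real t + 9 * real t * (real t - 1)"
proof -
  have "dist_matrix (Kst_adj s t) (s + t) \<in> carrier_mat (s + t) (s + t)"
    by (simp add: dist_matrix_def)
  then show ?thesis
    using assms by (simp add: mat_trace_square dist_matrix_Kst_index Kst_dist_product_sum)
qed

theorem theorem3p3:
  fixes n s1 t1 s2 t2 :: nat
  assumes "2 \<le> t1" "t1 \<le> s1" "2 \<le> t2" "t2 \<le> s2"
    and "s1 + t1 = n" "s2 + t2 = n"
    and "D_cospectral (Kst_adj s1 t1) (s1 + t1) (Kst_adj s2 t2) (s2 + t2)"
  shows "graph_iso (Kst_adj s1 t1) (s1 + t1) (Kst_adj s2 t2) (s2 + t2)"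
proof -
  have "char_poly (dist_matrix (Kst_adj s1 t1) n) = char_poly (dist_matrix (Kst_adj s2 t2) n)"
    using assms(5-7) by (simp add: D_cospectral_def)
  then have "mat_trace (dist_matrix (Kst_adj s1 t1) n * dist_matrix (Kst_adj s1 t1) n)
      = mat_trace (dist_matrix (Kst_adj s2 t2) n * dist_matrix (Kst_adj s2 t2) n)"
    by (intro char_poly_eq_imp_mat_trace_square_eq) (auto simp: dist_matrix_def)
  moreover have "real s1 = real n - real t1" "real s2 = real n - real t2"
    using assms(5,6) by auto
  ultimately have "(real t1 - real t2) * (6 * real n + 2 * (real t1 + real t2) - 14) = 0"
    using mat_trace_square_dist_matrix_Kst[OF assms(2)] mat_trace_square_dist_matrix_Kst[OF assms(4)]
    unfolding assms(5,6) by (simp add: algebra_simps power2_eq_square)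
  moreover have "6 * real n + 2 * (real t1 + real t2) - 14 > 0"
    using assms by simp
  ultimately have "t1 = t2" by simp
  with assms(5,6) have "s1 = s2 \<and> t1 = t2" by simp
  then show ?thesis unfolding graph_iso_def by (intro exI[of _ id]) auto
qed

end
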